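(* Let $S$ be a nonempty set of graphs on $\Pi$, $A$ the closed-above model generated by $S$, and $r>0$. Then $\mathrm{eqdom}(S^r)$-set agreement is solvable in $r$ rounds on $A$.
   Context: Fix $\Pi=\{p_1,\dots,p_n\}$. A graph is a directed graph on $\Pi$ containing all self-loops; $Out_G(p)=\{q:(p,q)\in E(G)\}$, $In_G(p)=\{q:(q,p)\in E(G)\}$, $Out_G(P)=\bigcup_{p\in P}Out_G(p)$. Computation proceeds in failure-free, communication-closed rounds: in round $r$ a graph $G_r$ is chosen and each $p$ receives the round-$r$ messages of the processes in $In_{G_r}(p)$. $\uparrow G=\{H:E(H)\supseteq E(G)\}$; the closed-above model generated by $S$ allows exactly the executions whose round graphs each lie in $\bigcup_{G\in S}\uparrow G$. In $k$-set agreement each process starts with an input from a totally ordered set $V_{in}$ and must decide a value so that every decided value is some process's input and at most $k$ distinct values are decided; it is solvable in $r$ rounds if some algorithm guarantees this, with all processes deciding after $r$ rounds, in every allowed execution and input assignment. $\mathrm{eqdom}(G)=\min\{i\in[1,n]:\forall P\subseteq\Pi,\ |P|=i\Rightarrow Out_G(P)=\Pi\}$ and $\mathrm{eqdom}(S)=\max_{G\in S}\mathrm{eqdom}(G)$. The graph path product $G\otimes H$ has edge set $\{(u,v):\exists w,\ (u,w)\in E(G)\wedge(w,v)\in E(H)\}$, and $S^r=\{G_1\otimes\cdots\otimes G_r: G_1,\dots,G_r\in S\}$. *)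

theory Defs
  imports Main
begin

text \<open>Processes are the elements of a finite type 'p (so Pi = UNIV, n = CARD('p)).
A graph is an edge relation on 'p containing all self-loops.\<close>

type_synonym 'p graph = "('p \<times> 'p) set"

definition is_graph :: "'p graph \<Rightarrow> bool" where
  "is_graph G \<longleftrightarrow> (\<forall>p. (p, p) \<in> G)"

definition Out :: "'p graph \<Rightarrow> 'p \<Rightarrow> 'p set" where
  "Out G p = {q. (p, q) \<in> G}"

definition In :: "'p graph \<Rightarrow> 'p \<Rightarrow> 'p set" where
  "In G p = {q. (q, p) \<in> G}"

definition OutSet :: "'p graph \<Rightarrow> 'p set \<Rightarrow> 'p set" where
  "OutSet G P = (\<Union>p\<in>P. Out G p)"

definition up :: "'p graph \<Rightarrow> 'p graph set" where
  "up G = {H. G \<subseteq> H}"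

definition closed_above :: "'p graph set \<Rightarrow> 'p graph set" where
  "closed_above S = (\<Union>G\<in>S. up G)"

definition eqdom :: "('p::finite) graph \<Rightarrow> nat" where
  "eqdom G = (LEAST i. i \<in> {1..card (UNIV :: 'p set)} \<and>
                (\<forall>P::'p set. card P = i \<longrightarrow> OutSet G P = UNIV))"

definition eqdom_set :: "('p::finite) graph set \<Rightarrow> nat" where
  "eqdom_set S = Max (eqdom ` S)"

definition gprod :: "'p graph \<Rightarrow> 'p graph \<Rightarrow> 'p graph" (infixl "\<otimes>\<^sub>g" 70) where
  "G \<otimes>\<^sub>g H = {(u, v). \<exists>w. (u, w) \<in> G \<and> (w, v) \<in> H}"

fun spow :: "'p graph set \<Rightarrow> nat \<Rightarrow> 'p graph set" where
  "spow S 0 = {Id}"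
| "spow S (Suc r) = {G \<otimes>\<^sub>g H | G H. G \<in> spow S r \<and> H \<in> S}"

text \<open>Round-based algorithms. States and messages are taken in the full-information
view type, which is general enough to encode the state of any deterministic algorithm.\<close>

datatype ('p, 'v) fiview =
    FInit 'p 'v
  | FStep nat 'p "('p, 'v) fiview" "'p \<Rightarrow> ('p, 'v) fiview option"

record ('p, 'v, 's, 'm) algorithm =
  init   :: "'p \<Rightarrow> 'v \<Rightarrow> 's"
  send   :: "nat \<Rightarrow> 'p \<Rightarrow> 's \<Rightarrow> 'm"
  trans  :: "nat \<Rightarrow> 'p \<Rightarrow> 's \<Rightarrow> ('p \<Rightarrow> 'm option) \<Rightarrow> 's"
  decide :: "'p \<Rightarrow> 's \<Rightarrow> 'v"

text \<open>State of process p after k rounds; gs k is the round-k graph (rounds 1,2,...).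
In round k, p receives the round-k message of exactly the processes in In (gs k) p.\<close>
fun run :: "('p, 'v, 's, 'm) algorithm \<Rightarrow> (nat \<Rightarrow> 'p graph) \<Rightarrow> ('p \<Rightarrow> 'v) \<Rightarrow> nat \<Rightarrow> 'p \<Rightarrow> 's" where
  "run A gs x 0 p = init A p (x p)"
| "run A gs x (Suc k) p =
     trans A (Suc k) p (run A gs x k p)
       (\<lambda>q. if q \<in> In (gs (Suc k)) p then Some (send A (Suc k) q (run A gs x k q)) else None)"

definition allowed_exec :: "'p graph set \<Rightarrow> (nat \<Rightarrow> 'p graph) \<Rightarrow> bool" where
  "allowed_exec M gs \<longleftrightarrow> (\<forall>i\<ge>1. gs i \<in> M)"

definition solves_kset :: "('p, 'v, 's, 'm) algorithm \<Rightarrow> nat \<Rightarrow> nat \<Rightarrow> 'p graph set \<Rightarrow> bool" where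
  "solves_kset A k r M \<longleftrightarrow>
     (\<forall>gs x. allowed_exec M gs \<longrightarrow>
        (let dec = (\<lambda>p. decide A p (run A gs x r p)) in
          (\<forall>p. dec p \<in> range x) \<and> card (range dec) \<le> k))"

definition kset_solvable :: "'v itself \<Rightarrow> nat \<Rightarrow> nat \<Rightarrow> ('p::finite) graph set \<Rightarrow> bool" where
  "kset_solvable (_ :: 'v itself) k r M \<longleftrightarrow>
     (\<exists>A :: ('p, 'v, ('p, 'v) fiview, ('p, 'v) fiview) algorithm. solves_kset A k r M)"

end

theory Submission
  imports Defs
begin

text \<open>Every process floods the minimum input it has heard of and decides on it.
After \<open>r\<close> rounds of an execution of the closed-above model, the product of the
round graphs contains some \<open>H \<in> S\<^sup>r\<close>. Let \<open>P\<close> be a set of \<open>eqdom H\<close> processes with the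
smallest inputs; it dominates \<open>H\<close>, so every process has heard of some \<open>q \<in> P\<close> and
decides at most \<open>x q\<close>. A decided value is an input, so it is either an input of \<open>P\<close>
or at least every input of \<open>P\<close>, and hence equal to \<open>x q\<close>. Thus all decisions lie
in \<open>x ` P\<close>, which has at most \<open>eqdom H \<le> eqdom (S\<^sup>r)\<close> elements.\<close>

definition view_value :: "('p, 'v) fiview \<Rightarrow> 'v" where
  "view_value s = (case s of FInit p v \<Rightarrow> v | FStep _ _ _ _ \<Rightarrow> undefined)"

text \<open>The state \<open>FInit p v\<close> merely records the current minimum \<open>v\<close>.\<close>

definition min_flooding ::
    "('p::finite, 'v::linorder, ('p, 'v) fiview, ('p, 'v) fiview) algorithm" where
  "min_flooding =
    \<lparr>init = (\<lambda>p v. FInit p v),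
     send = (\<lambda>k p s. s),
     trans = (\<lambda>k p s msgs. FInit p (Min (insert (view_value s)
                 ((\<lambda>q. view_value (the (msgs q))) ` {q. msgs q \<noteq> None})))),
     decide = (\<lambda>p s. view_value s)\<rparr>"

fun round_product :: "(nat \<Rightarrow> 'p graph) \<Rightarrow> nat \<Rightarrow> 'p graph" where
  "round_product gs 0 = Id"
| "round_product gs (Suc k) = round_product gs k \<otimes>\<^sub>g gs (Suc k)"

lemma min_flooding_value_Suc:
  "view_value (run min_flooding gs x (Suc k) p) =
     Min (insert (view_value (run min_flooding gs x k p))
       ((\<lambda>q. view_value (run min_flooding gs x k q)) ` In (gs (Suc k)) p))"
proof -
  have "{q. (if q \<in> In (gs (Suc k)) p then Some (run min_flooding gs x k q) else None) \<noteq> None}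
      = In (gs (Suc k)) p"
    by auto
  then show ?thesis
    by (simp add: min_flooding_def view_value_def cong: image_cong)
qed

lemma min_flooding_value_in_inputs:
  "view_value (run min_flooding gs x k (p::'p::finite)) \<in> range (x :: 'p \<Rightarrow> 'v::linorder)"
proof (induction k arbitrary: p)
  case 0
  then show ?case by (simp add: min_flooding_def view_value_def)
next
  case (Suc k)
  let ?A = "insert (view_value (run min_flooding gs x k p))
              ((\<lambda>q. view_value (run min_flooding gs x k q)) ` In (gs (Suc k)) p)"
  have "Min ?A \<in> ?A" by (intro Min_in) auto
  moreover have "?A \<subseteq> range x" using Suc.IH by auto
  ultimately show ?case unfolding min_flooding_value_Suc by blast
qed

lemma min_flooding_value_le_heard_of:
  assumes "(q, p) \<in> round_product gs k"
  shows "view_value (run min_flooding gs x k (p::'p::finite)) \<le> (x q :: 'v::linorder)"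
  using assms
proof (induction k arbitrary: p)
  case 0
  then show ?case by (simp add: min_flooding_def view_value_def)
next
  case (Suc k)
  then obtain w where w: "(q, w) \<in> round_product gs k" "(w, p) \<in> gs (Suc k)"
    by (auto simp: gprod_def)
  let ?A = "insert (view_value (run min_flooding gs x k p))
              ((\<lambda>q. view_value (run min_flooding gs x k q)) ` In (gs (Suc k)) p)"
  have "view_value (run min_flooding gs x k w) \<in> ?A" using w(2) by (auto simp: In_def)
  then have "Min ?A \<le> view_value (run min_flooding gs x k w)" by (intro Min_le) auto
  also have "\<dots> \<le> x q" using Suc.IH w(1) .
  finally show ?case unfolding min_flooding_value_Suc .
qed

lemma min_flooding_decisions_subset_lowest_inputs:
  fixes x :: "'p::finite \<Rightarrow> 'v::linorder"
  assumes "H \<subseteq> round_product gs k"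
    and "OutSet H P = UNIV"
    and lowest: "\<forall>q\<in>P. \<forall>q'. q' \<notin> P \<longrightarrow> x q \<le> x q'"
  shows "range (\<lambda>p. view_value (run min_flooding gs x k p)) \<subseteq> x ` P"
proof clarify
  fix p
  let ?v = "view_value (run min_flooding gs x k p)"
  obtain q where q: "q \<in> P" "(q, p) \<in> H"
    using assms(2) by (auto simp: OutSet_def Out_def)
  have le: "?v \<le> x q"
    using min_flooding_value_le_heard_of q(2) assms(1) by blast
  obtain q' where q': "?v = x q'" using min_flooding_value_in_inputs by blast
  show "?v \<in> x ` P"
  proof (cases "q' \<in> P")
    case False
    then have "x q \<le> x q'" using lowest q(1) by blast
    then show ?thesis using le q' q(1) by auto
  qed (use q' in auto)
qed

lemma gprod_mono: "G \<subseteq> G' \<Longrightarrow> H \<subseteq> H' \<Longrightarrow> G \<otimes>\<^sub>g H \<subseteq> G' \<otimes>\<^sub>g H'"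
  by (auto simp: gprod_def)

lemma spow_is_graph: "\<forall>G\<in>S. is_graph G \<Longrightarrow> H \<in> spow S k \<Longrightarrow> is_graph H"
  by (induction k arbitrary: H) (auto simp: is_graph_def gprod_def)

lemma allowed_exec_round_product_contains_spow:
  assumes "allowed_exec (closed_above S) gs"
  shows "\<exists>H\<in>spow S k. H \<subseteq> round_product gs k"
proof (induction k)
  case 0
  then show ?case by simp
next
  case (Suc k)
  then obtain H where H: "H \<in> spow S k" "H \<subseteq> round_product gs k" by blast
  have "gs (Suc k) \<in> closed_above S" using assms by (simp add: allowed_exec_def)
  then obtain G where G: "G \<in> S" "G \<subseteq> gs (Suc k)" by (auto simp: closed_above_def up_def)
  have "H \<otimes>\<^sub>g G \<in> spow S (Suc k)" using H G by auto
  moreover have "H \<otimes>\<^sub>g G \<subseteq> round_product gs (Suc k)" using H G by (simp add: gprod_mono)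
  ultimately show ?case by blast
qed

lemma eqdom_spec:
  fixes H :: "('p::finite) graph"
  assumes "is_graph H"
  shows "eqdom H \<in> {1..card (UNIV :: 'p set)} \<and> (\<forall>P::'p set. card P = eqdom H \<longrightarrow> OutSet H P = UNIV)"
  unfolding eqdom_def
proof (rule LeastI)
  have "OutSet H UNIV = UNIV" using assms by (auto simp: OutSet_def Out_def is_graph_def)
  then show "card (UNIV :: 'p set) \<in> {1..card (UNIV :: 'p set)} \<and>
      (\<forall>P::'p set. card P = card (UNIV :: 'p set) \<longrightarrow> OutSet H P = UNIV)"
    using finite_UNIV_card_ge_0[where ?'a='p] card_eq_UNIV_imp_eq_UNIV[where ?'a='p]
    by (auto simp: Suc_le_eq)
qed

lemma eqdom_le_card: "is_graph (H :: ('p::finite) graph) \<Longrightarrow> eqdom H \<le> card (UNIV :: 'p set)"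
  using eqdom_spec by auto

lemma eqdom_dominates: "is_graph H \<Longrightarrow> card P = eqdom H \<Longrightarrow> OutSet H P = UNIV"
  using eqdom_spec by blast

lemma eqdom_le_eqdom_set: "H \<in> spow S k \<Longrightarrow> eqdom H \<le> eqdom_set (spow S k)"
  unfolding eqdom_set_def by (intro Max_ge) auto

lemma exists_lowest_inputs:
  fixes x :: "'p::finite \<Rightarrow> 'v::linorder"
  assumes "k \<le> card (UNIV :: 'p set)"
  shows "\<exists>P. card P = k \<and> (\<forall>q\<in>P. \<forall>q'. q' \<notin> P \<longrightarrow> x q \<le> x q')"
proof -
  obtain xs where xs: "set xs = (UNIV :: 'p set)" "distinct xs"
    using finite_distinct_list[of "UNIV :: 'p set"] by auto
  define ys where "ys = sort_key x xs"
  have ys: "distinct ys" "set ys = UNIV" "length ys = card (UNIV :: 'p set)" "sorted (map x ys)"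
    using xs distinct_card[of xs] by (simp_all add: ys_def)
  let ?P = "set (take k ys)"
  have "card ?P = k" using ys assms by (simp add: distinct_card)
  moreover have "x q \<le> x q'" if "q \<in> ?P" "q' \<notin> ?P" for q q'
  proof -
    have "q' \<in> set (drop k ys)" using that(2) ys(2)
      by (metis UNIV_I Un_iff append_take_drop_id set_append)
    moreover have "sorted_wrt (\<le>) (map x (take k ys) @ map x (drop k ys))"
      using ys(4) by (metis append_take_drop_id map_append)
    ultimately show ?thesis using that(1) by (auto simp: sorted_wrt_append)
  qed
  ultimately show ?thesis by blast
qed

theorem theorem7:
  fixes S :: "('p::finite) graph set" and r :: nat
  assumes "S \<noteq> {}"
    and "\<forall>G\<in>S. is_graph G"
    and "r > 0"
  shows "kset_solvable TYPE('v::linorder) (eqdom_set (spow S r)) r (closed_above S)"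
  unfolding kset_solvable_def solves_kset_def Let_def
proof (intro exI[of _ min_flooding] allI impI conjI)
  fix gs and x :: "'p \<Rightarrow> 'v"
  assume "allowed_exec (closed_above S) gs"
  then obtain H where H: "H \<in> spow S r" "H \<subseteq> round_product gs r"
    using allowed_exec_round_product_contains_spow by blast
  have graph: "is_graph H" using spow_is_graph assms(2) H(1) .
  obtain P where P: "card P = eqdom H" "\<forall>q\<in>P. \<forall>q'. q' \<notin> P \<longrightarrow> x q \<le> x q'"
    using exists_lowest_inputs eqdom_le_card[OF graph] by blast
  have decide: "decide min_flooding p s = view_value s" for p s
    by (simp add: min_flooding_def)
  show "decide min_flooding p (run min_flooding gs x r p) \<in> range x" for p
    unfolding decide by (rule min_flooding_value_in_inputs)
  have "card (range (\<lambda>p. decide min_flooding p (run min_flooding gs x r p))) \<le> card (x ` P)"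
    unfolding decide using H(2) eqdom_dominates[OF graph P(1)] P(2)
    by (intro card_mono min_flooding_decisions_subset_lowest_inputs) auto
  also have "\<dots> \<le> card P" by (rule card_image_le) simp
  also have "\<dots> \<le> eqdom_set (spow S r)" using P(1) eqdom_le_eqdom_set H(1) by simp
  finally show "card (range (\<lambda>p. decide min_flooding p (run min_flooding gs x r p)))
      \<le> eqdom_set (spow S r)" .
qed

end
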